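(* Let $n\ge1$ and $f,g\in\Lambda_n$ with $f\ne0$ and $f\cdot g\in\mathrm{im}(\nu_{n-1/n})$. If $\mu(f)=0$ and $\lambda(f)<p^{n-1}$, then $g\in\mathrm{im}(\nu_{n-1/n})$.
   Context: Let $p$ be an odd prime. For $n\ge0$ let $G_n$ be a cyclic group of order $p^n$ with surjections $G_n\to G_{n-1}$, $\Lambda_n=\mathbf{Z}_p[G_n]$, $\widetilde\Lambda_n=\mathbf{F}_p[G_n]$ and $\widetilde I_n$ the augmentation ideal of $\widetilde\Lambda_n$. For nonzero $f\in\Lambda_n$, $\mu(f)$ is the unique integer with $f\in p^{\mu(f)}\Lambda_n\setminus p^{\mu(f)+1}\Lambda_n$, and $\lambda(f)$ is the unique integer such that the reduction mod $p$ of $p^{-\mu(f)}f$ lies in $\widetilde I_n^{\lambda(f)}\setminus\widetilde I_n^{\lambda(f)+1}$. $\nu_{n-1/n}:\Lambda_{n-1}\to\Lambda_n$ is the $\mathbf{Z}_p$-linear map with $\nu_{n-1/n}(\sigma)=\sum_{\tau\in G_n,\ \tau\mapsto\sigma}\tau$ for $\sigma\in G_{n-1}$. *)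

theory Defs
  imports "HOL-Computational_Algebra.Primes"
begin

text \<open>Group rings of the cyclic group G_n = Z/p^n (generator 1, elements 0..p^n-1,
  surjection G_n -> G_(n-1) given by reduction mod p^(n-1)).  An element of a group ring
  is a coefficient function a :: nat => int with a i = 0 for i >= p^n.\<close>

definition grmult :: "int \<Rightarrow> nat \<Rightarrow> (nat \<Rightarrow> int) \<Rightarrow> (nat \<Rightarrow> int) \<Rightarrow> nat \<Rightarrow> int" where
  "grmult q N a b i = (if i < N then
     (\<Sum>j<N. \<Sum>l<N. if (j + l) mod N = i then a j * b l else 0) mod q else 0)"

definition gradd :: "int \<Rightarrow> nat \<Rightarrow> (nat \<Rightarrow> int) \<Rightarrow> (nat \<Rightarrow> int) \<Rightarrow> nat \<Rightarrow> int" where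
  "gradd q N a b i = (if i < N then (a i + b i) mod q else 0)"

text \<open>Lambda_n = Z_p[G_n], realised as the inverse limit of (Z/p^k)[G_n]:
  F k i is the i-th coefficient (a p-adic integer) reduced mod p^k, in [0,p^k).\<close>

definition Lam :: "nat \<Rightarrow> nat \<Rightarrow> (nat \<Rightarrow> nat \<Rightarrow> int) set" where
  "Lam p n = {F. \<forall>k i. 0 \<le> F k i \<and> F k i < int p ^ k \<and> (p ^ n \<le> i \<longrightarrow> F k i = 0)
                      \<and> F (Suc k) i mod int p ^ k = F k i}"

definition lam_mult :: "nat \<Rightarrow> nat \<Rightarrow> (nat \<Rightarrow> nat \<Rightarrow> int) \<Rightarrow> (nat \<Rightarrow> nat \<Rightarrow> int) \<Rightarrow> nat \<Rightarrow> nat \<Rightarrow> int" where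
  "lam_mult p n F G = (\<lambda>k. grmult (int p ^ k) (p ^ n) (F k) (G k))"

definition smul :: "nat \<Rightarrow> int \<Rightarrow> (nat \<Rightarrow> nat \<Rightarrow> int) \<Rightarrow> nat \<Rightarrow> nat \<Rightarrow> int" where
  "smul p c F = (\<lambda>k i. (c * F k i) mod int p ^ k)"

definition pLam :: "nat \<Rightarrow> nat \<Rightarrow> nat \<Rightarrow> (nat \<Rightarrow> nat \<Rightarrow> int) set" where
  "pLam p n m = {smul p (int p ^ m) G | G. G \<in> Lam p n}"

definition mu :: "nat \<Rightarrow> nat \<Rightarrow> (nat \<Rightarrow> nat \<Rightarrow> int) \<Rightarrow> nat" where
  "mu p n F = (THE m. F \<in> pLam p n m \<and> F \<notin> pLam p n (Suc m))"

definition Ltil :: "nat \<Rightarrow> nat \<Rightarrow> (nat \<Rightarrow> int) set" where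
  "Ltil p n = {a. \<forall>i. 0 \<le> a i \<and> a i < int p \<and> (p ^ n \<le> i \<longrightarrow> a i = 0)}"

definition aug :: "nat \<Rightarrow> nat \<Rightarrow> (nat \<Rightarrow> int) set" where
  "aug p n = {a \<in> Ltil p n. (\<Sum>i<p ^ n. a i) mod int p = 0}"

inductive_set idprod :: "nat \<Rightarrow> nat \<Rightarrow> (nat \<Rightarrow> int) set \<Rightarrow> (nat \<Rightarrow> int) set \<Rightarrow> (nat \<Rightarrow> int) set"
  for p n A B where
  zero: "(\<lambda>i. 0) \<in> idprod p n A B"
| prod: "a \<in> A \<Longrightarrow> b \<in> B \<Longrightarrow> grmult (int p) (p ^ n) a b \<in> idprod p n A B"
| add: "x \<in> idprod p n A B \<Longrightarrow> y \<in> idprod p n A B \<Longrightarrow> gradd (int p) (p ^ n) x y \<in> idprod p n A B"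

fun augpow :: "nat \<Rightarrow> nat \<Rightarrow> nat \<Rightarrow> (nat \<Rightarrow> int) set" where
  "augpow p n 0 = Ltil p n"
| "augpow p n (Suc m) = idprod p n (augpow p n m) (aug p n)"

definition lambda :: "nat \<Rightarrow> nat \<Rightarrow> (nat \<Rightarrow> nat \<Rightarrow> int) \<Rightarrow> nat" where
  "lambda p n F = (let G = (THE G. G \<in> Lam p n \<and> F = smul p (int p ^ mu p n F) G)
                   in THE l. G 1 \<in> augpow p n l \<and> G 1 \<notin> augpow p n (Suc l))"

text \<open>nu_{n-1/n}: sigma in G_(n-1) goes to the sum of its preimages in G_n.\<close>
definition nu :: "nat \<Rightarrow> nat \<Rightarrow> (nat \<Rightarrow> nat \<Rightarrow> int) \<Rightarrow> nat \<Rightarrow> nat \<Rightarrow> int" where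
  "nu p n G = (\<lambda>k i. if i < p ^ n then G k (i mod p ^ (n - 1)) else 0)"

end

theory Submission
  imports Defs "HOL-Computational_Algebra.Polynomial"
begin

(* Identify (Z/p^k)[G_n] with Z[X]/(p^k, X^N - 1), where N = p^n, and put m = p^(n-1) and
   Phi = 1 + X^m + ... + X^((p-1)m), the cyclotomic polynomial of order N. Then
   X^N - 1 = Phi (X^m - 1), and the image of nu consists of the elements with m-periodic
   coefficients, i.e. the multiples of Phi.

   Modulo Phi, X - 1 behaves like a uniformizer of Z[zeta_N]: with phi = N - m the ideals
   (Phi, p^k) and (Phi, (X-1)^(k phi)) coincide, and a factor whose value at X = 1 is prime to p
   can be cancelled. The hypotheses mu(f) = 0 and lambda(f) = L < m give
   f = (X-1)^L u + p s with u(1) prime to p, so f has valuation L < phi. If f g lies in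
   (Phi, p^(k+1)), then g lies in (Phi, (X-1)^((k+1) phi - L)), which is contained in
   (Phi, p^k). Hence (X^m - 1) g vanishes modulo (p^k, X^N - 1): every level of g is
   m-periodic, which is membership in the image of nu. *)

section \<open>Ideals generated by two elements\<close>

definition ideal2 :: "'a::comm_ring_1 \<Rightarrow> 'a \<Rightarrow> 'a set" where
  "ideal2 a b = {a * x + b * y | x y. True}"

lemma ideal2_iff: "h \<in> ideal2 a b \<longleftrightarrow> (\<exists>x y. h = a * x + b * y)"
  by (simp add: ideal2_def)

lemma ideal2_left [intro]: "a * x \<in> ideal2 a b"
  unfolding ideal2_iff by (rule exI[of _ x], rule exI[of _ 0]) simp

lemma ideal2_right [intro]: "b * y \<in> ideal2 a b"
  unfolding ideal2_iff by (rule exI[of _ 0], rule exI[of _ y]) simp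

lemma ideal2_gen_left [intro]: "a \<in> ideal2 a b"
  using ideal2_left[of a 1 b] by simp

lemma ideal2_gen_right [intro]: "b \<in> ideal2 a b"
  using ideal2_right[of b 1 a] by simp

lemma ideal2_one_right [simp]: "h \<in> ideal2 a 1"
  using ideal2_right[of 1 h a] by simp

lemma ideal2_if_dvd_left: "a dvd h \<Longrightarrow> h \<in> ideal2 a b"
  by (erule dvdE) auto

lemma ideal2_if_dvd_right: "b dvd h \<Longrightarrow> h \<in> ideal2 a b"
  by (erule dvdE) auto

lemma ideal2_zero [intro]: "0 \<in> ideal2 a b"
  using ideal2_left[of a 0 b] by simp

lemma ideal2_add [intro]:
  assumes "h \<in> ideal2 a b" and "h' \<in> ideal2 a b"
  shows "h + h' \<in> ideal2 a b"
proof -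
  obtain x y x' y' where "h = a * x + b * y" "h' = a * x' + b * y'"
    using assms unfolding ideal2_iff by blast
  then have "h + h' = a * (x + x') + b * (y + y')" by (simp add: algebra_simps)
  then show ?thesis unfolding ideal2_iff by blast
qed

lemma ideal2_mult_left [intro]:
  assumes "h \<in> ideal2 a b"
  shows "c * h \<in> ideal2 a b"
proof -
  obtain x y where "h = a * x + b * y" using assms unfolding ideal2_iff by blast
  then have "c * h = a * (c * x) + b * (c * y)" by (simp add: algebra_simps)
  then show ?thesis unfolding ideal2_iff by blast
qed

lemma ideal2_mult_right [intro]: "h \<in> ideal2 a b \<Longrightarrow> h * c \<in> ideal2 a b"
  using ideal2_mult_left[of h a b c] by (simp add: mult.commute)

lemma ideal2_uminus [intro]: "h \<in> ideal2 a b \<Longrightarrow> - h \<in> ideal2 a b"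
  using ideal2_mult_left[of h a b "- 1"] by simp

lemma ideal2_diff [intro]: "h \<in> ideal2 a b \<Longrightarrow> h' \<in> ideal2 a b \<Longrightarrow> h - h' \<in> ideal2 a b"
  using ideal2_add[of h a b "- h'"] by auto

lemma ideal2_if_diff: "h \<in> ideal2 a b \<Longrightarrow> h' - h \<in> ideal2 a b \<Longrightarrow> h' \<in> ideal2 a b"
  using ideal2_add[of h a b "h' - h"] by simp

lemma ideal2_subset:
  assumes "a \<in> ideal2 c d" and "b \<in> ideal2 c d"
  shows "ideal2 a b \<subseteq> ideal2 c d"
proof
  fix h assume "h \<in> ideal2 a b"
  then obtain x y where "h = a * x + b * y" unfolding ideal2_iff by blast
  then show "h \<in> ideal2 c d" using assms by auto
qed

lemma ideal2_subset_dvd: "b' dvd b \<Longrightarrow> ideal2 a b \<subseteq> ideal2 a b'"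
  by (rule ideal2_subset) (auto simp: mult.assoc)

lemma ideal2_subset_power: "j \<le> l \<Longrightarrow> ideal2 a (b ^ l) \<subseteq> ideal2 a (b ^ j)"
  by (intro ideal2_subset_dvd le_imp_power_dvd)

lemma ideal2_mult_ideal2:
  assumes "h \<in> ideal2 a b" and "h' \<in> ideal2 a b'"
  shows "h * h' \<in> ideal2 a (b * b')"
proof -
  obtain x y x' y' where "h = a * x + b * y" "h' = a * x' + b' * y'"
    using assms unfolding ideal2_iff by blast
  then have "h * h' = a * (x * h' + b * y * x') + b * b' * (y * y')"
    by (simp add: algebra_simps)
  then show ?thesis unfolding ideal2_iff by blast
qed

lemma ideal2_power: "h \<in> ideal2 a b \<Longrightarrow> h ^ k \<in> ideal2 a (b ^ k)"
proof (induction k)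
  case 0
  show ?case by auto
next
  case (Suc k)
  then show ?case using ideal2_mult_ideal2[of h a b "h ^ k" "b ^ k"] by simp
qed

section \<open>The Frobenius congruence\<close>

lemma prime_dvd_add_power_prime:
  fixes a b :: "'a::comm_ring_1"
  assumes "prime p"
  shows "of_nat p dvd (a + b) ^ p - a ^ p - b ^ p"
proof -
  define t where "t k = of_nat (p choose k) * a ^ k * b ^ (p - k)" for k
  have p1: "p > 1" using assms prime_gt_1_nat by blast
  have "{..p} = insert 0 (insert p {1..<p})" using p1 by auto
  then have "(a + b) ^ p = t 0 + (t p + (\<Sum>k\<in>{1..<p}. t k))"
    using p1 by (simp add: binomial_ring t_def[symmetric])
  then have "(a + b) ^ p - a ^ p - b ^ p = (\<Sum>k\<in>{1..<p}. t k)"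
    by (simp add: t_def)
  moreover have "of_nat p dvd t k" if "k \<in> {1..<p}" for k
  proof -
    have "p dvd p choose k" using that assms by (intro dvd_choose_prime) auto
    then show ?thesis unfolding t_def by auto
  qed
  ultimately show ?thesis by (metis dvd_sum)
qed

lemma prime_dvd_add_power_prime_power:
  fixes a b :: "'a::comm_ring_1"
  assumes p: "prime p"
  shows "of_nat p dvd (a + b) ^ p ^ j - a ^ p ^ j - b ^ p ^ j"
proof (induction j)
  case 0
  show ?case by simp
next
  case (Suc j)
  define u where "u = a ^ p ^ j + b ^ p ^ j"
  obtain c where c: "(a + b) ^ p ^ j = u + of_nat p * c"
    using Suc unfolding u_def by (auto simp: algebra_simps)
  have pow: "x ^ p ^ Suc j = (x ^ p ^ j) ^ p" for x :: 'a
    by (simp add: power_mult[symmetric] mult.commute)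
  have "(a + b) ^ p ^ Suc j - a ^ p ^ Suc j - b ^ p ^ Suc j
      = ((u + of_nat p * c) ^ p - u ^ p - (of_nat p * c) ^ p) + (of_nat p * c) ^ p
        + (u ^ p - (a ^ p ^ j) ^ p - (b ^ p ^ j) ^ p)"
    unfolding pow c by simp
  moreover have "of_nat p dvd (of_nat p * c :: 'a) ^ p"
    using prime_gt_0_nat[OF p] by (intro dvd_trans[OF _ dvd_power]) auto
  ultimately show ?case unfolding u_def
    by (metis dvd_add prime_dvd_add_power_prime[OF p])
qed

lemma X_power_prime_power_cong:
  assumes "prime p"
  shows "[:int p:] dvd [:0,1:] ^ p ^ j - 1 - [:-1,1:] ^ p ^ j"
proof -
  have "[:-1,1:] + 1 = ([:0,1:] :: int poly)" by (simp add: one_pCons)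
  then show ?thesis
    using prime_dvd_add_power_prime_power[OF assms, of "[:-1,1:] :: int poly" 1 j]
    by (simp add: of_nat_poly algebra_simps)
qed


section \<open>Divisibility by powers of X - 1 modulo an ideal\<close>

lemma ideal2_X_minus_one_iff:
  fixes P h :: "'a::comm_ring_1 poly"
  shows "h \<in> ideal2 P [:-1,1:] \<longleftrightarrow> poly P 1 dvd poly h 1"
proof
  assume "h \<in> ideal2 P [:-1,1:]"
  then obtain x y where "h = P * x + [:-1,1:] * y" unfolding ideal2_iff by blast
  then show "poly P 1 dvd poly h 1" by simp
next
  define \<pi> :: "'a poly" where "\<pi> = [:-1,1:]"
  have split: "\<exists>q. r = [:poly r 1:] + \<pi> * q" for r
  proof -
    have "\<pi> dvd r - [:poly r 1:]"
      using poly_eq_0_iff_dvd[of "r - [:poly r 1:]" 1] by (simp add: \<pi>_def)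
    then obtain q where "r - [:poly r 1:] = \<pi> * q" by (rule dvdE)
    then show ?thesis by (metis add_diff_cancel_left' add_diff_eq)
  qed
  assume "poly P 1 dvd poly h 1"
  then obtain z where z: "poly h 1 = poly P 1 * z" by (rule dvdE)
  obtain q w where h: "h = [:poly P 1 * z:] + \<pi> * q" and P: "P = [:poly P 1:] + \<pi> * w"
    using split z by metis
  have "h = ([:poly P 1:] + \<pi> * w) * [:z:] + \<pi> * (q - w * [:z:])"
    by (subst h) (simp add: algebra_simps)
  then have "h = P * [:z:] + \<pi> * (q - w * [:z:])"
    using P by simp
  then show "h \<in> ideal2 P [:-1,1:]" unfolding ideal2_iff \<pi>_def by blast
qed

lemma ideal2_cancel_X_minus_one_power:
  fixes P h :: "'a::idom poly"
  assumes "poly P 1 \<noteq> 0" and "[:-1,1:] ^ l * h \<in> ideal2 P ([:-1,1:] ^ (j + l))"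
  shows "h \<in> ideal2 P ([:-1,1:] ^ j)"
  using assms(2)
proof (induction l arbitrary: h)
  case 0
  then show ?case by simp
next
  case (Suc l)
  define \<pi> :: "'a poly" where "\<pi> = [:-1,1:]"
  obtain x y where xy: "\<pi> * (\<pi> ^ l * h) = P * x + \<pi> * (\<pi> ^ (j + l) * y)"
    using Suc.prems unfolding ideal2_iff \<pi>_def by (auto simp: algebra_simps)
  have "poly \<pi> 1 = 0" by (simp add: \<pi>_def)
  then have "poly P 1 * poly x 1 = 0"
    using arg_cong[OF xy, of "\<lambda>r. poly r 1"] by simp
  then have "\<pi> dvd x" using assms(1) by (simp add: poly_eq_0_iff_dvd[symmetric] \<pi>_def)
  then obtain x' where "x = \<pi> * x'" by (rule dvdE)
  with xy have "\<pi> * (\<pi> ^ l * h) = \<pi> * (P * x' + \<pi> ^ (j + l) * y)"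
    by (simp add: algebra_simps)
  moreover have "\<pi> \<noteq> 0" by (simp add: \<pi>_def)
  ultimately have "\<pi> ^ l * h = P * x' + \<pi> ^ (j + l) * y" by simp
  then show ?case using Suc.IH unfolding ideal2_iff \<pi>_def by blast
qed

lemma ideal2_cancel_unit:
  fixes P v g :: "int poly"
  assumes P: "prime (poly P 1)" and v: "\<not> poly P 1 dvd poly v 1"
    and "v * g \<in> ideal2 P ([:-1,1:] ^ j)"
  shows "g \<in> ideal2 P ([:-1,1:] ^ j)"
  using assms(3)
proof (induction j)
  case 0
  show ?case by simp
next
  case (Suc j)
  have "v * g \<in> ideal2 P ([:-1,1:] ^ j)"
    using Suc.prems ideal2_subset_power[of j "Suc j" P "[:-1,1:]"] by auto
  then obtain a b where g: "g = P * a + [:-1,1:] ^ j * b"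
    using Suc.IH unfolding ideal2_iff by blast
  have "[:-1,1:] ^ j * (v * b) = v * g - P * (v * a)"
    unfolding g by (simp add: algebra_simps)
  also have "\<dots> \<in> ideal2 P ([:-1,1:] ^ (1 + j))"
    using Suc.prems by auto
  finally have "v * b \<in> ideal2 P [:-1,1:]"
    using ideal2_cancel_X_minus_one_power[of P j "v * b" 1] P by (metis not_prime_0 power_one_right)
  then have "poly P 1 dvd poly b 1"
    using P v by (simp add: ideal2_X_minus_one_iff prime_dvd_mult_iff)
  then have "[:-1,1:] ^ j * b \<in> ideal2 P ([:-1,1:] ^ j * [:-1,1:])"
    by (intro ideal2_mult_ideal2) (auto simp: ideal2_X_minus_one_iff)
  then show ?case unfolding g by (auto simp: power_Suc2)
qed

section \<open>Cyclotomic polynomials of p-power order\<close>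

(* Phi p (p^e) is the cyclotomic polynomial of order p^(e+1). *)
definition Phi :: "nat \<Rightarrow> nat \<Rightarrow> int poly" where
  "Phi p m = (\<Sum>j<p. [:0,1:] ^ (j * m))"

lemma Phi_times_X_power_minus_one: "Phi p m * ([:0,1:] ^ m - 1) = [:0,1:] ^ (p * m) - 1"
proof -
  have "([:0,1:] ^ m) ^ p - 1 = ([:0,1:] ^ m - 1) * (\<Sum>j<p. ([:0,1:] ^ m) ^ j :: int poly)"
    by (rule power_diff_1_eq)
  then show ?thesis unfolding Phi_def by (simp add: power_mult[symmetric] mult.commute)
qed

lemma poly_Phi_one: "poly (Phi p m) 1 = int p"
  by (simp add: Phi_def poly_sum)

lemma const_dvd_cancel_X_minus_one_power:
  fixes R :: "int poly"
  assumes "[:q:] dvd R * [:-1,1:] ^ k"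
  shows "[:q:] dvd R"
proof -
  have "content (r ^ k) = content r ^ k" for r :: "int poly"
    by (induction k) (simp_all add: content_mult)
  moreover have "content ([:-1,1:] :: int poly) = 1" by (simp add: content_def)
  ultimately have "content ([:-1,1:] ^ k :: int poly) = 1" by simp
  then show ?thesis using assms by (simp add: const_poly_dvd_iff_dvd_content content_mult)
qed

lemma Phi_prime_power_cong:
  assumes p: "prime p"
  shows "[:int p:] dvd Phi p (p ^ e) - [:-1,1:] ^ (p ^ Suc e - p ^ e)"
proof -
  define m where "m = p ^ e"
  define X :: "int poly" where "X = [:0,1:]"
  define \<pi> :: "int poly" where "\<pi> = [:-1,1:]"
  have Phi: "Phi p m * (X ^ m - 1) = X ^ (p * m) - 1"
    unfolding X_def by (rule Phi_times_X_power_minus_one)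
  have "m \<le> p * m" using prime_ge_1_nat[OF p] by simp
  then have "(Phi p m - \<pi> ^ (p * m - m)) * \<pi> ^ m = Phi p m * \<pi> ^ m - \<pi> ^ (p * m)"
    by (simp add: algebra_simps power_add[symmetric])
  also have "\<dots> = (X ^ (p * m) - 1 - \<pi> ^ (p * m)) - Phi p m * (X ^ m - 1 - \<pi> ^ m)"
    unfolding Phi[symmetric] by (simp add: algebra_simps)
  also have "[:int p:] dvd \<dots>"
    using X_power_prime_power_cong[OF p, of e] X_power_prime_power_cong[OF p, of "Suc e"]
    unfolding X_def \<pi>_def m_def power_Suc by (intro dvd_diff[of _ "_ - _ - _"] dvd_mult) assumption+
  finally have "[:int p:] dvd (Phi p m - \<pi> ^ (p * m - m)) * \<pi> ^ m" .
  then show ?thesis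
    unfolding m_def \<pi>_def power_Suc by (rule const_dvd_cancel_X_minus_one_power)
qed

lemma Phi_prime_power_eq:
  assumes p: "prime p"
  obtains h where "Phi p (p ^ e) = [:-1,1:] ^ (p ^ Suc e - p ^ e) + [:int p:] * h"
    and "poly h 1 = 1"
proof -
  obtain h where h: "Phi p (p ^ e) - [:-1,1:] ^ (p ^ Suc e - p ^ e) = [:int p:] * h"
    using Phi_prime_power_cong[OF p] by (rule dvdE)
  have "p ^ e < p ^ Suc e" using prime_gt_1_nat[OF p] by simp
  then have "int p = int p * poly h 1"
    using arg_cong[OF h, of "\<lambda>r. poly r 1"] by (simp add: poly_Phi_one zero_power)
  then have "poly h 1 = 1" using p by (simp add: prime_gt_0_nat)
  moreover have "Phi p (p ^ e) = [:-1,1:] ^ (p ^ Suc e - p ^ e) + [:int p:] * h"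
    using h by (simp add: algebra_simps)
  ultimately show ?thesis by (rule that[rotated])
qed

lemma ideal2_Phi_const_eq:
  assumes p: "prime p"
  shows "ideal2 (Phi p (p ^ e)) [:int p ^ k:]
    = ideal2 (Phi p (p ^ e)) ([:-1,1:] ^ (k * (p ^ Suc e - p ^ e)))"
proof -
  define \<Phi> where "\<Phi> = Phi p (p ^ e)"
  define \<phi> where "\<phi> = p ^ Suc e - p ^ e"
  obtain h where h: "\<Phi> = [:-1,1:] ^ \<phi> + [:int p:] * h" and h1: "poly h 1 = 1"
    using Phi_prime_power_eq[OF p] unfolding \<Phi>_def \<phi>_def by blast
  have P: "prime (poly \<Phi> 1)" using p by (simp add: \<Phi>_def poly_Phi_one)
  moreover have "\<not> poly \<Phi> 1 dvd poly h 1" using P h1 not_prime_unit by metis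
  moreover have "h * [:int p:] \<in> ideal2 \<Phi> ([:-1,1:] ^ \<phi>)"
    using ideal2_diff[OF ideal2_gen_left ideal2_gen_right, of \<Phi> "[:-1,1:] ^ \<phi>"]
    by (simp add: h mult.commute)
  ultimately have "[:int p:] \<in> ideal2 \<Phi> ([:-1,1:] ^ \<phi>)" by (rule ideal2_cancel_unit)
  then have "[:int p:] ^ k \<in> ideal2 \<Phi> (([:-1,1:] ^ \<phi>) ^ k)" by (rule ideal2_power)
  then have 1: "ideal2 \<Phi> [:int p ^ k:] \<subseteq> ideal2 \<Phi> ([:-1,1:] ^ (k * \<phi>))"
    by (intro ideal2_subset) (auto simp: poly_const_pow power_mult[symmetric] mult.commute)
  have "[:-1,1:] ^ \<phi> \<in> ideal2 \<Phi> [:int p:]"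
    using ideal2_diff[OF ideal2_gen_left ideal2_right, of \<Phi> "[:int p:]" h] by (simp add: h)
  then have "([:-1,1:] ^ \<phi>) ^ k \<in> ideal2 \<Phi> ([:int p:] ^ k)" by (rule ideal2_power)
  then have 2: "ideal2 \<Phi> ([:-1,1:] ^ (k * \<phi>)) \<subseteq> ideal2 \<Phi> [:int p ^ k:]"
    by (intro ideal2_subset) (auto simp: poly_const_pow power_mult[symmetric] mult.commute)
  from 1 2 show ?thesis unfolding \<Phi>_def \<phi>_def by (rule equalityI)
qed

lemma ideal2_Phi_const_cancel:
  assumes p: "prime p" and l: "l < p ^ Suc e - p ^ e"
    and f: "f - [:-1,1:] ^ l * v \<in> ideal2 (Phi p (p ^ e)) [:int p:]"
    and v: "\<not> int p dvd poly v 1"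
    and fg: "f * g \<in> ideal2 (Phi p (p ^ e)) [:int p ^ Suc k:]"
  shows "g \<in> ideal2 (Phi p (p ^ e)) [:int p ^ k:]"
proof -
  define \<Phi> where "\<Phi> = Phi p (p ^ e)"
  define \<phi> where "\<phi> = p ^ Suc e - p ^ e"
  define \<pi> :: "int poly" where "\<pi> = [:-1,1:]"
  have J: "ideal2 \<Phi> [:int p ^ j:] = ideal2 \<Phi> (\<pi> ^ (j * \<phi>))" for j
    unfolding \<Phi>_def \<phi>_def \<pi>_def by (rule ideal2_Phi_const_eq[OF p])
  have \<Phi>1: "poly \<Phi> 1 = int p" by (simp add: \<Phi>_def poly_Phi_one)
  have "f - \<pi> ^ l * v \<in> ideal2 \<Phi> (\<pi> ^ \<phi>)"
    using f J[of 1] by (simp add: \<pi>_def \<Phi>_def)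
  then obtain a b where ab: "f - \<pi> ^ l * v = \<Phi> * a + \<pi> ^ \<phi> * b"
    unfolding ideal2_iff by blast
  define v' where "v' = v + \<pi> ^ (\<phi> - l) * b"
  have "\<pi> ^ \<phi> = \<pi> ^ l * \<pi> ^ (\<phi> - l)"
    using l by (simp add: \<phi>_def power_add[symmetric])
  then have f': "f = \<pi> ^ l * v' + \<Phi> * a"
    using ab by (simp add: v'_def algebra_simps)
  have "poly \<pi> 1 = 0" by (simp add: \<pi>_def)
  then have "poly v' 1 = poly v 1" using l by (simp add: v'_def \<phi>_def zero_power)
  have "\<pi> ^ l * (v' * g) = f * g - \<Phi> * (a * g)"
    by (simp add: f' algebra_simps)
  also have "\<dots> \<in> ideal2 \<Phi> (\<pi> ^ ((Suc k * \<phi> - l) + l))"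
    using fg J[of "Suc k"] l by (auto simp: \<Phi>_def \<phi>_def)
  finally have "v' * g \<in> ideal2 \<Phi> (\<pi> ^ (Suc k * \<phi> - l))"
    unfolding \<pi>_def by (rule ideal2_cancel_X_minus_one_power[rotated]) (use \<Phi>1 p in auto)
  then have "g \<in> ideal2 \<Phi> (\<pi> ^ (Suc k * \<phi> - l))"
    unfolding \<pi>_def by (rule ideal2_cancel_unit[rotated 2])
      (use \<Phi>1 p v \<open>poly v' 1 = poly v 1\<close> in auto)
  also have "\<dots> \<subseteq> ideal2 \<Phi> (\<pi> ^ (k * \<phi>))"
    using l by (intro ideal2_subset_power) (simp add: \<phi>_def)
  finally show ?thesis using J[of k] by (simp add: \<Phi>_def)
qed

section \<open>Group rings of cyclic groups as quotients of Z[X]\<close>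

lemma monic_div_exists:
  fixes M x :: "'a::idom poly"
  assumes "lead_coeff M = 1"
  obtains d r where "x = M * d + r" and "r = 0 \<or> degree r < degree M"
proof -
  obtain d r where dr: "pseudo_divmod x M = (d, r)" by (cases "pseudo_divmod x M")
  have "M \<noteq> 0" using assms by auto
  from pseudo_divmod[OF this dr] assms show ?thesis by (intro that[of d r]) auto
qed

lemma const_dvd_if_in_ideal2_monic:
  fixes M Q :: "'a::idom poly"
  assumes M: "lead_coeff M = 1" and Q: "degree Q < degree M" and QM: "Q \<in> ideal2 [:q:] M"
  shows "[:q:] dvd Q"
proof -
  obtain x y where xy: "Q = [:q:] * x + M * y" using QM unfolding ideal2_iff by blast
  obtain d r where x: "x = M * d + r" and r: "r = 0 \<or> degree r < degree M"
    using monic_div_exists[OF M] by blast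
  have eq: "Q - [:q:] * r = M * (y + [:q:] * d)"
    by (simp add: xy x algebra_simps)
  have "degree ([:q:] * r) < degree M"
    using r Q by (auto intro: le_less_trans[OF degree_mult_le] simp: degree_pCons_0)
  then have "degree (Q - [:q:] * r) < degree M"
    using Q degree_diff_le_max[of Q "[:q:] * r"] by linarith
  moreover have "degree (M * (y + [:q:] * d)) = degree M + degree (y + [:q:] * d)"
    if "y + [:q:] * d \<noteq> 0"
    using that M by (intro degree_mult_eq) auto
  ultimately have "y + [:q:] * d = 0" using eq by fastforce
  with eq have "Q = [:q:] * r" by simp
  then show ?thesis by (simp del: mult_pCons_left)
qed

(* (Z/q)[G_N] is read as Z[X]/(q, X^N - 1), the generator of G_N being X. *)
definition grpoly :: "nat \<Rightarrow> (nat \<Rightarrow> int) \<Rightarrow> int poly" where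
  "grpoly N a = (\<Sum>i<N. monom (a i) i)"

lemma coeff_grpoly: "coeff (grpoly N a) t = (if t < N then a t else 0)"
  unfolding grpoly_def coeff_sum by simp

lemma degree_less_if_coeff_zero:
  fixes Q :: "'a::zero poly"
  assumes "N > 0" and "\<And>t. N \<le> t \<Longrightarrow> coeff Q t = 0"
  shows "degree Q < N"
proof -
  have "degree Q \<le> N - 1" using assms by (intro degree_le) auto
  then show ?thesis using assms(1) by linarith
qed

lemma degree_grpoly_less: "N > 0 \<Longrightarrow> degree (grpoly N a) < N"
  by (rule degree_less_if_coeff_zero) (auto simp: coeff_grpoly)

lemma grpoly_diff: "grpoly N (\<lambda>i. a i - b i) = grpoly N a - grpoly N b"
  by (rule poly_eqI) (simp add: coeff_grpoly)

lemma grpoly_cong: "(\<And>i. i < N \<Longrightarrow> a i = b i) \<Longrightarrow> grpoly N a = grpoly N b"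
  by (rule poly_eqI) (simp add: coeff_grpoly)

lemma poly_grpoly_one: "poly (grpoly N a) 1 = (\<Sum>i<N. a i)"
  unfolding grpoly_def by (simp add: poly_sum poly_monom)

lemma const_dvd_grpoly_mod: "[:q:] dvd grpoly N (\<lambda>i. r i mod q) - grpoly N r"
proof -
  have "q dvd r i mod q - r i" for i
    by (metis dvd_minus_mod dvd_minus_iff minus_diff_eq)
  then show ?thesis
    unfolding grpoly_diff[symmetric] by (simp add: const_poly_dvd_iff coeff_grpoly)
qed

lemma X_power_minus_one_dvd_monom_mod:
  "([:0,1:] ^ N - 1 :: 'a::comm_ring_1 poly) dvd monom c t - monom c (t mod N)"
proof -
  have "monom c t = monom c (t mod N) * ([:0,1:] ^ N) ^ (t div N)"
    by (simp add: monom_altdef power_mult[symmetric] power_add[symmetric])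
  then have "monom c t - monom c (t mod N) = monom c (t mod N) * (([:0,1:] ^ N) ^ (t div N) - 1)"
    by (simp add: algebra_simps)
  moreover have "([:0,1:] ^ N - 1 :: 'a poly) dvd ([:0,1:] ^ N) ^ (t div N) - 1"
    by (simp add: power_diff_1_eq)
  ultimately show ?thesis by simp
qed

lemma X_power_minus_one_monic:
  assumes "N > 0"
  shows "degree ([:0,1:] ^ N - 1 :: 'a::comm_ring_1 poly) = N"
    and "lead_coeff ([:0,1:] ^ N - 1 :: 'a::comm_ring_1 poly) = 1"
proof -
  have eq: "[:0,1:] ^ N - 1 = - 1 + ([:0,1:] ^ N :: 'a poly)" by simp
  have d: "degree (- 1 :: 'a poly) < degree ([:0,1:] ^ N :: 'a poly)"
    using assms by (simp add: degree_linear_power)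
  show "degree ([:0,1:] ^ N - 1 :: 'a poly) = N"
    unfolding eq degree_add_eq_right[OF d] by (rule degree_linear_power)
  show "lead_coeff ([:0,1:] ^ N - 1 :: 'a poly) = 1"
    unfolding eq lead_coeff_add_le[OF d] degree_linear_power by (rule coeff_linear_power)
qed

lemma grpoly_grmult:
  assumes "N > 0"
  shows "grpoly N (grmult q N a b) - grpoly N a * grpoly N b \<in> ideal2 [:q:] ([:0,1:] ^ N - 1)"
proof -
  define conv where "conv i = (\<Sum>j<N. \<Sum>l<N. if (j + l) mod N = i then a j * b l else 0)" for i
  have "grpoly N (grmult q N a b) = grpoly N (\<lambda>i. conv i mod q)"
    by (rule grpoly_cong) (simp add: grmult_def conv_def)
  moreover have "grpoly N conv = (\<Sum>j<N. \<Sum>l<N. monom (a j * b l) ((j + l) mod N))"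
  proof (rule poly_eqI)
    fix t
    have "(j + l) mod N \<noteq> t" if "\<not> t < N" for j l
      using that assms by (metis mod_less_divisor)
    then show "coeff (grpoly N conv) t = coeff (\<Sum>j<N. \<Sum>l<N. monom (a j * b l) ((j + l) mod N)) t"
      by (auto simp: coeff_grpoly coeff_sum conv_def)
  qed
  moreover have "grpoly N a * grpoly N b = (\<Sum>j<N. \<Sum>l<N. monom (a j * b l) (j + l))"
    unfolding grpoly_def sum_product by (simp add: mult_monom)
  ultimately have "grpoly N (grmult q N a b) - grpoly N a * grpoly N b
      = (grpoly N (\<lambda>i. conv i mod q) - grpoly N conv)
        - (\<Sum>j<N. \<Sum>l<N. monom (a j * b l) (j + l) - monom (a j * b l) ((j + l) mod N))"
    by (simp add: sum_subtractf)
  moreover have "([:0,1:] ^ N - 1) dvd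
      (\<Sum>j<N. \<Sum>l<N. monom (a j * b l) (j + l) - monom (a j * b l) ((j + l) mod N))"
    by (intro dvd_sum X_power_minus_one_dvd_monom_mod)
  ultimately show ?thesis
    using const_dvd_grpoly_mod[of q N conv] by (auto intro: ideal2_if_dvd_left ideal2_if_dvd_right)
qed

lemma grpoly_gradd:
  "grpoly N (gradd q N a b) - (grpoly N a + grpoly N b) \<in> ideal2 [:q:] ([:0,1:] ^ N - 1)"
proof -
  have "grpoly N (gradd q N a b) = grpoly N (\<lambda>i. (a i + b i) mod q)"
    by (rule grpoly_cong) (simp add: gradd_def)
  moreover have "grpoly N a + grpoly N b = grpoly N (\<lambda>i. a i + b i)"
    by (rule poly_eqI) (simp add: coeff_grpoly)
  ultimately show ?thesis
    using const_dvd_grpoly_mod[of q N "\<lambda>i. a i + b i"] by (auto intro: ideal2_if_dvd_left)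
qed

lemma grmult_in_Ltil: "p > 0 \<Longrightarrow> grmult (int p) (p ^ n) a b \<in> Ltil p n"
  by (simp add: Ltil_def grmult_def)

lemma gradd_in_Ltil: "p > 0 \<Longrightarrow> gradd (int p) (p ^ n) a b \<in> Ltil p n"
  by (simp add: Ltil_def gradd_def)

lemma const_dvd_if_in_ideal2_X_power_minus_one:
  fixes Q :: "'a::idom poly"
  assumes "N > 0" and "degree Q < N" and "Q \<in> ideal2 [:q:] ([:0,1:] ^ N - 1)"
  shows "[:q:] dvd Q"
proof (rule const_dvd_if_in_ideal2_monic[OF _ _ assms(3)])
  show "lead_coeff ([:0,1:] ^ N - 1 :: 'a poly) = 1" by (rule X_power_minus_one_monic[OF assms(1)])
  show "degree Q < degree ([:0,1:] ^ N - 1 :: 'a poly)"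
    unfolding X_power_minus_one_monic[OF assms(1)] by (rule assms(2))
qed

lemma grpoly_coeff: "degree R < N \<Longrightarrow> grpoly N (coeff R) = R"
  by (rule poly_eqI) (auto simp: coeff_grpoly coeff_eq_0)

lemma Ltil_eq_if_const_dvd:
  assumes a: "a \<in> Ltil p n" and c: "c \<in> Ltil p n"
    and dvd: "[:int p:] dvd grpoly (p ^ n) a - grpoly (p ^ n) c"
  shows "a = c"
proof
  fix i
  show "a i = c i"
  proof (cases "i < p ^ n")
    case True
    have "int p dvd coeff (grpoly (p ^ n) (\<lambda>i. a i - c i)) i"
      using dvd unfolding grpoly_diff[symmetric] const_poly_dvd_iff by blast
    then have "int p dvd a i - c i" using True by (simp add: coeff_grpoly)
    then have "a i mod int p = c i mod int p" by (simp add: mod_eq_dvd_iff)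
    then show ?thesis using a c unfolding Ltil_def by simp
  next
    case False
    then show ?thesis using a c unfolding Ltil_def by simp
  qed
qed

lemma Ltil_eq_if_in_ideal2:
  assumes a: "a \<in> Ltil p n" and c: "c \<in> Ltil p n"
    and ac: "grpoly (p ^ n) a - grpoly (p ^ n) c \<in> ideal2 [:int p:] ([:0,1:] ^ p ^ n - 1)"
  shows "a = c"
proof (rule Ltil_eq_if_const_dvd[OF a c])
  have "0 \<le> a 0" "a 0 < int p" using a unfolding Ltil_def by auto
  then have "p > 0" by simp
  then show "[:int p:] dvd grpoly (p ^ n) a - grpoly (p ^ n) c"
    using ac by (intro const_dvd_if_in_ideal2_X_power_minus_one)
      (auto simp: grpoly_diff[symmetric] degree_grpoly_less)
qed

lemma Ltil_representative:
  assumes "p > 0"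
  obtains c where "c \<in> Ltil p n" and "grpoly (p ^ n) c - Q \<in> ideal2 [:int p:] ([:0,1:] ^ p ^ n - 1)"
proof -
  define N where "N = p ^ n"
  have N: "N > 0" using assms by (simp add: N_def)
  obtain d r where Q: "Q = ([:0,1:] ^ N - 1) * d + r" and "r = 0 \<or> degree r < N"
    using monic_div_exists[OF X_power_minus_one_monic(2)[OF N]] X_power_minus_one_monic(1)[OF N]
    by metis
  then have r: "grpoly N (coeff r) = r" using N by (auto intro: grpoly_coeff)
  define c where "c i = (if i < N then coeff r i mod int p else 0)" for i
  have "c \<in> Ltil p n" using assms unfolding Ltil_def c_def N_def by auto
  moreover have "grpoly N c = grpoly N (\<lambda>i. coeff r i mod int p)"
    by (rule grpoly_cong) (simp add: c_def)
  then have "grpoly N c - Q = (grpoly N (\<lambda>i. coeff r i mod int p) - grpoly N (coeff r))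
      - ([:0,1:] ^ N - 1) * d"
    by (simp add: Q r)
  then have "grpoly N c - Q \<in> ideal2 [:int p:] ([:0,1:] ^ N - 1)"
    using ideal2_diff[OF ideal2_if_dvd_left[OF const_dvd_grpoly_mod] ideal2_right] by simp
  ultimately show ?thesis using that unfolding N_def by blast
qed

lemma monom_times_X_power: "monom a n * [:0,1:] ^ k = monom a (n + k)"
  by (simp add: monom_altdef power_add)

lemma grpoly_periodic:
  assumes "\<And>i. i < p * m \<Longrightarrow> c i = c (i mod m)"
  shows "grpoly (p * m) c = grpoly m c * Phi p m"
proof -
  have "grpoly (p * m) c = (\<Sum>j<p. \<Sum>i\<in>{j * m..<j * m + m}. monom (c i) i)"
    unfolding grpoly_def by (rule sum.nat_group[symmetric])
  also have "\<dots> = (\<Sum>j<p. \<Sum>i<m. monom (c i) (i + j * m))"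
  proof (rule sum.cong[OF refl])
    fix j assume j: "j \<in> {..<p}"
    have "(\<Sum>i\<in>{j * m..<j * m + m}. monom (c i) i) = (\<Sum>i<m. monom (c (i + j * m)) (i + j * m))"
      using sum.shift_bounds_nat_ivl[of "\<lambda>i. monom (c i) i" 0 "j * m" m]
      by (simp add: atLeast0LessThan add.commute)
    also have "\<dots> = (\<Sum>i<m. monom (c i) (i + j * m))"
    proof (rule sum.cong[OF refl])
      fix i assume i: "i \<in> {..<m}"
      have "i + j * m < Suc j * m" using i by simp
      also have "\<dots> \<le> p * m" using j by (intro mult_right_mono) auto
      finally have "c (i + j * m) = c ((i + j * m) mod m)" by (rule assms)
      then have "c (i + j * m) = c i" using i by simp
      then show "monom (c (i + j * m)) (i + j * m) = monom (c i) (i + j * m)" by simp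
    qed
    finally show "(\<Sum>i\<in>{j * m..<j * m + m}. monom (c i) i) = (\<Sum>i<m. monom (c i) (i + j * m))" .
  qed
  also have "\<dots> = grpoly m c * Phi p m"
    unfolding grpoly_def Phi_def sum_product monom_times_X_power by (rule sum.swap)
  finally show ?thesis .
qed

lemma dvd_shift_if_X_power_times_cong:
  assumes m: "0 < m" "m < N"
    and b: "[:0,1:] ^ m * grpoly N b - grpoly N b \<in> ideal2 [:q:] ([:0,1:] ^ N - 1)"
    and i: "i + m < N"
  shows "q dvd b (i + m) - b i"
proof -
  define r where "r = (\<Sum>j<N. monom (b j) ((j + m) mod N))"
  have coeff_r: "coeff r t = (\<Sum>j<N. if (j + m) mod N = t then b j else 0)" for t
    unfolding r_def coeff_sum by simp
  have shift: "[:0,1:] ^ m * grpoly N b = (\<Sum>j<N. monom (b j) (j + m))"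
    unfolding grpoly_def sum_distrib_left by (simp add: mult.commute monom_times_X_power)
  then have "([:0,1:] ^ N - 1) dvd [:0,1:] ^ m * grpoly N b - r"
    unfolding r_def shift sum_subtractf[symmetric]
    by (intro dvd_sum X_power_minus_one_dvd_monom_mod)
  then have "([:0,1:] ^ m * grpoly N b - grpoly N b) - ([:0,1:] ^ m * grpoly N b - r)
      \<in> ideal2 [:q:] ([:0,1:] ^ N - 1)"
    by (rule ideal2_diff[OF b ideal2_if_dvd_right])
  then have "r - grpoly N b \<in> ideal2 [:q:] ([:0,1:] ^ N - 1)" by simp
  moreover have "degree (r - grpoly N b) < N"
  proof (rule degree_less_if_coeff_zero)
    fix t assume "N \<le> t"
    moreover have "(j + m) mod N \<noteq> t" if "N \<le> t" for j
      using that m mod_less_divisor[of N "j + m"] by linarith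
    ultimately show "coeff (r - grpoly N b) t = 0" by (simp add: coeff_r coeff_grpoly)
  qed (use m in simp)
  ultimately have "[:q:] dvd r - grpoly N b"
    using m by (intro const_dvd_if_in_ideal2_X_power_minus_one) auto
  then have "q dvd coeff (r - grpoly N b) (i + m)" by (simp only: const_poly_dvd_iff)
  moreover have "(j + m) mod N = i + m \<longleftrightarrow> j = i" if "j < N" for j
    using that i m by (cases "j + m < N") (auto simp: le_mod_geq)
  then have "coeff r (i + m) = b i"
    unfolding coeff_r using i by (simp add: if_distrib cong: if_cong)
  ultimately have "q dvd b i - b (i + m)" using i by (simp add: coeff_grpoly)
  then show ?thesis by (metis dvd_minus_iff minus_diff_eq)
qed

lemma dvd_shift_if_in_ideal2_Phi:
  assumes b: "grpoly (p * m) b \<in> ideal2 (Phi p m) [:q:]" and i: "i + m < p * m"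
  shows "q dvd b (i + m) - b i"
proof (rule dvd_shift_if_X_power_times_cong[OF _ _ _ i])
  show "m < p * m" using i by linarith
  then show "0 < m" by (cases "m = 0") auto
  obtain x y where "grpoly (p * m) b = Phi p m * x + [:q:] * y"
    using b unfolding ideal2_iff by blast
  then have "[:0,1:] ^ m * grpoly (p * m) b - grpoly (p * m) b
      = [:q:] * (([:0,1:] ^ m - 1) * y) + Phi p m * ([:0,1:] ^ m - 1) * x"
    by (simp add: algebra_simps)
  then show "[:0,1:] ^ m * grpoly (p * m) b - grpoly (p * m) b
      \<in> ideal2 [:q:] ([:0,1:] ^ (p * m) - 1)"
    unfolding ideal2_iff Phi_times_X_power_minus_one by blast
qed

section \<open>Powers of the augmentation ideal\<close>

(* Since X^N - 1 = (X-1)^N mod p, the l-th power of the augmentation ideal of F_p[G_N] is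
   generated by (X-1)^(min l N); it vanishes from l = N on. *)
lemma X_power_minus_one_in_ideal2:
  assumes "prime p"
  shows "[:0,1:] ^ p ^ n - 1 \<in> ideal2 [:int p:] ([:-1,1:] ^ min l (p ^ n))"
proof -
  have "[:0,1:] ^ p ^ n - 1 - [:-1,1:] ^ p ^ n \<in> ideal2 [:int p:] ([:-1,1:] ^ min l (p ^ n))"
    using X_power_prime_power_cong[OF assms] by (rule ideal2_if_dvd_left)
  moreover have "[:-1,1:] ^ p ^ n \<in> ideal2 [:int p:] ([:-1,1:] ^ min l (p ^ n))"
    by (intro ideal2_if_dvd_right le_imp_power_dvd) simp
  ultimately show ?thesis using ideal2_add by fastforce
qed

lemma ideal2_X_power_minus_one_subset:
  assumes "prime p"
  shows "ideal2 [:int p:] ([:0,1:] ^ p ^ n - 1) \<subseteq> ideal2 [:int p:] ([:-1,1:] ^ min l (p ^ n))"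
  using X_power_minus_one_in_ideal2[OF assms] by (intro ideal2_subset) auto

lemma Ltil_eq_zero_if_in_ideal2:
  assumes c: "c \<in> Ltil p n" and "grpoly (p ^ n) c \<in> ideal2 [:int p:] ([:-1,1:] ^ p ^ n)"
  shows "c = (\<lambda>i. 0)"
proof (rule Ltil_eq_if_const_dvd[OF c])
  have "0 \<le> c 0" "c 0 < int p" using c unfolding Ltil_def by auto
  then show "(\<lambda>i. 0) \<in> Ltil p n" unfolding Ltil_def by auto
  have "lead_coeff ([:-1,1:] ^ p ^ n :: int poly) = 1"
    and "degree ([:-1,1:] ^ p ^ n :: int poly) = p ^ n"
    by (simp_all add: coeff_linear_power degree_linear_power)
  moreover have "degree (grpoly (p ^ n) c) < p ^ n"
    using \<open>c 0 < int p\<close> \<open>0 \<le> c 0\<close> by (intro degree_grpoly_less) simp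
  ultimately have "[:int p:] dvd grpoly (p ^ n) c"
    using assms(2) by (intro const_dvd_if_in_ideal2_monic) auto
  moreover have "grpoly (p ^ n) (\<lambda>i. 0) = 0" by (simp add: grpoly_def)
  ultimately show "[:int p:] dvd grpoly (p ^ n) c - grpoly (p ^ n) (\<lambda>i. 0)" by simp
qed

(* The element sigma - 1 for the generator sigma, with the coefficient -1 represented by p - 1. *)
definition sigma_minus_one :: "nat \<Rightarrow> nat \<Rightarrow> int" where
  "sigma_minus_one p i = (if i = 0 then int p - 1 else if i = 1 then 1 else 0)"

lemma grpoly_sigma_minus_one:
  assumes "2 \<le> N"
  shows "grpoly N (sigma_minus_one p) = [:int p:] + [:-1,1:]"
proof (rule poly_eqI)
  fix t
  show "coeff (grpoly N (sigma_minus_one p)) t = coeff ([:int p:] + [:-1,1:]) t"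
    using assms
    by (cases t) (auto simp: coeff_grpoly sigma_minus_one_def coeff_pCons split: nat.split)
qed

lemma sigma_minus_one_in_aug:
  assumes p: "prime p" and n: "1 \<le> n"
  shows "sigma_minus_one p \<in> aug p n"
proof -
  have "p ^ 1 \<le> p ^ n" using n prime_gt_0_nat[OF p] by (intro power_increasing) auto
  then have N: "2 \<le> p ^ n" using prime_ge_2_nat[OF p] by simp
  then have "sigma_minus_one p \<in> Ltil p n"
    using prime_ge_2_nat[OF p] unfolding Ltil_def sigma_minus_one_def by auto
  moreover have "(\<Sum>i<p ^ n. sigma_minus_one p i) = int p"
    using N by (simp add: poly_grpoly_one[symmetric] grpoly_sigma_minus_one)
  ultimately show ?thesis unfolding aug_def by simp
qed

lemma grmult_sigma_minus_one_eq:
  assumes p: "prime p" and n: "1 \<le> n" and c: "c \<in> Ltil p n"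
    and cQ: "grpoly (p ^ n) c = [:int p:] * A + [:-1,1:] * Q"
    and c'Q: "grpoly (p ^ n) c' - Q \<in> ideal2 [:int p:] ([:0,1:] ^ p ^ n - 1)"
  shows "grmult (int p) (p ^ n) c' (sigma_minus_one p) = c"
proof (rule Ltil_eq_if_in_ideal2[OF _ c])
  define N where "N = p ^ n"
  define \<pi> :: "int poly" where "\<pi> = [:-1,1:]"
  let ?S = "grpoly N (sigma_minus_one p)"
  let ?x = "grmult (int p) N c' (sigma_minus_one p)"
  have N: "2 \<le> N"
    using n prime_ge_2_nat[OF p] power_increasing[of 1 n p] unfolding N_def by fastforce
  have "?S = [:int p:] + \<pi>" unfolding \<pi>_def by (rule grpoly_sigma_minus_one[OF N])
  moreover have "grpoly N c = [:int p:] * A + \<pi> * Q" unfolding N_def \<pi>_def by (rule cQ)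
  ultimately have "grpoly N ?x - grpoly N c
      = (grpoly N ?x - grpoly N c' * ?S) + ?S * (grpoly N c' - Q) + [:int p:] * (Q - A)"
    by (simp add: algebra_simps smult_diff_right)
  also have "\<dots> \<in> ideal2 [:int p:] ([:0,1:] ^ N - 1)"
    using N c'Q unfolding N_def[symmetric]
    by (intro ideal2_add ideal2_left ideal2_mult_left grpoly_grmult) auto
  finally show "grpoly (p ^ n) ?x - grpoly (p ^ n) c \<in> ideal2 [:int p:] ([:0,1:] ^ p ^ n - 1)"
    unfolding N_def .
  show "?x \<in> Ltil p n" using p unfolding N_def by (simp add: grmult_in_Ltil prime_gt_0_nat)
qed

lemma augpow_imp_in_ideal2:
  assumes p: "prime p" and c: "c \<in> augpow p n l"
  shows "c \<in> Ltil p n \<and> grpoly (p ^ n) c \<in> ideal2 [:int p:] ([:-1,1:] ^ min l (p ^ n))"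
  using c
proof (induction l arbitrary: c)
  case 0
  then show ?case by auto
next
  case (Suc l)
  define N where "N = p ^ n"
  define K where "K = ideal2 [:int p:] ([:-1,1:] ^ min (Suc l) N)"
  have N: "N > 0" using p by (simp add: N_def prime_gt_0_nat)
  have XN: "ideal2 [:int p:] ([:0,1:] ^ N - 1) \<subseteq> K"
    unfolding K_def N_def by (rule ideal2_X_power_minus_one_subset[OF p])
  have Ltil: "gradd (int p) N x y \<in> Ltil p n" "grmult (int p) N x y \<in> Ltil p n" for x y
    using p unfolding N_def by (simp_all add: gradd_in_Ltil grmult_in_Ltil prime_gt_0_nat)
  from Suc.prems have "c \<in> idprod p n (augpow p n l) (aug p n)" by simp
  then show ?case unfolding N_def[symmetric] K_def[symmetric]
  proof (induction rule: idprod.induct)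
    case zero
    have "grpoly N (\<lambda>i. 0) = 0" by (simp add: grpoly_def)
    then show ?case using p by (auto simp: Ltil_def K_def prime_gt_0_nat)
  next
    case (prod a b)
    have "grpoly N a \<in> ideal2 [:int p:] ([:-1,1:] ^ min l N)"
      using Suc.IH prod(1) by (simp add: N_def)
    moreover have "grpoly N b \<in> ideal2 [:int p:] [:-1,1:]"
      using prod(2)
      by (auto simp: ideal2_X_minus_one_iff poly_grpoly_one aug_def N_def mod_eq_0_iff_dvd)
    ultimately have "grpoly N a * grpoly N b \<in> ideal2 [:int p:] ([:-1,1:] ^ Suc (min l N))"
      using ideal2_mult_ideal2 by (fastforce simp: power_Suc2)
    also have "\<dots> \<subseteq> K" unfolding K_def by (rule ideal2_subset_power) simp
    finally have "grpoly N a * grpoly N b \<in> K" .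
    moreover have "grpoly N (grmult (int p) N a b) - grpoly N a * grpoly N b \<in> K"
      using grpoly_grmult[OF N] XN by blast
    ultimately show ?case using Ltil unfolding K_def N_def by (blast intro: ideal2_if_diff)
  next
    case (add x y)
    then have "grpoly N x + grpoly N y \<in> K" unfolding K_def by blast
    moreover have "grpoly N (gradd (int p) N x y) - (grpoly N x + grpoly N y) \<in> K"
      using grpoly_gradd XN by blast
    ultimately show ?case using Ltil unfolding K_def N_def by (blast intro: ideal2_if_diff)
  qed
qed

lemma augpow_if_in_ideal2:
  assumes p: "prime p" and n: "1 \<le> n"
  shows "c \<in> Ltil p n \<Longrightarrow> grpoly (p ^ n) c \<in> ideal2 [:int p:] ([:-1,1:] ^ min l (p ^ n))
    \<Longrightarrow> c \<in> augpow p n l"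
proof (induction l arbitrary: c)
  case 0
  then show ?case by simp
next
  case (Suc l)
  define N where "N = p ^ n"
  show ?case
  proof (cases "l < N")
    case True
    then obtain A B where c: "grpoly N c = [:int p:] * A + [:-1,1:] ^ Suc l * B"
      using Suc.prems(2) unfolding N_def[symmetric] ideal2_iff by auto
    define Q where "Q = [:-1,1:] ^ l * B"
    obtain c' where c': "c' \<in> Ltil p n"
      and c'Q: "grpoly N c' - Q \<in> ideal2 [:int p:] ([:0,1:] ^ N - 1)"
      using Ltil_representative[of p n Q] p by (auto simp: N_def prime_gt_0_nat)
    have "grpoly N c' - Q \<in> ideal2 [:int p:] ([:-1,1:] ^ min l N)"
      using c'Q ideal2_X_power_minus_one_subset[OF p] unfolding N_def by blast
    moreover have "Q \<in> ideal2 [:int p:] ([:-1,1:] ^ min l N)"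
      using True unfolding Q_def by auto
    ultimately have "c' \<in> augpow p n l"
      using Suc.IH[OF c'] ideal2_if_diff unfolding N_def by blast
    then have "grmult (int p) N c' (sigma_minus_one p) \<in> augpow p n (Suc l)"
      using sigma_minus_one_in_aug[OF p n] by (simp add: N_def idprod.prod)
    moreover have "grpoly (p ^ n) c = [:int p:] * A + [:-1,1:] * Q"
      using c unfolding N_def Q_def power_Suc mult.assoc .
    ultimately show ?thesis
      using grmult_sigma_minus_one_eq[OF p n Suc.prems(1) _ c'Q[unfolded N_def]]
      by (simp add: N_def)
  next
    case False
    then have "c = (\<lambda>i. 0)"
      using Suc.prems by (intro Ltil_eq_zero_if_in_ideal2) (auto simp: N_def min_def)
    then show ?thesis using idprod.zero by simp
  qed
qed

lemma augpow_iff: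
  assumes "prime p" and "1 \<le> n" and "c \<in> Ltil p n"
  shows "c \<in> augpow p n l \<longleftrightarrow> grpoly (p ^ n) c \<in> ideal2 [:int p:] ([:-1,1:] ^ min l (p ^ n))"
  using assms augpow_imp_in_ideal2 augpow_if_in_ideal2 by blast

section \<open>The invariants mu and lambda\<close>

lemma Lam_mod_p:
  assumes F: "F \<in> Lam p n" and k: "1 \<le> k"
  shows "F k i mod int p = F 1 i"
  using k
proof (induction k rule: dec_induct)
  case base
  have "0 \<le> F 1 i \<and> F 1 i < int p ^ 1" using F unfolding Lam_def by blast
  then show ?case by simp
next
  case (step k)
  have "F (Suc k) i mod int p ^ k = F k i" using F unfolding Lam_def by blast
  moreover have "int p dvd int p ^ k" using step(1) by simp
  ultimately show ?case using step(3) by (metis mod_mod_cancel)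
qed

lemma Lam_one_in_Ltil:
  assumes "F \<in> Lam p n"
  shows "F 1 \<in> Ltil p n"
proof -
  have "\<forall>i. 0 \<le> F 1 i \<and> F 1 i < int p ^ 1 \<and> (p ^ n \<le> i \<longrightarrow> F 1 i = 0)"
    using assms unfolding Lam_def by blast
  then show ?thesis unfolding Ltil_def by simp
qed

lemma smul_one: "G \<in> Lam p n \<Longrightarrow> smul p 1 G = G"
  unfolding smul_def Lam_def by (intro ext) simp

lemma pLam_Suc_imp:
  assumes p: "p > 0" and F: "F \<in> pLam p n (Suc j)"
  shows "F \<in> pLam p n j"
proof -
  obtain G where G: "G \<in> Lam p n" and FG: "F = smul p (int p ^ Suc j) G"
    using F unfolding pLam_def by blast
  define G' where "G' = smul p (int p) G"
  have "G' \<in> Lam p n" unfolding Lam_def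
  proof (intro CollectI allI conjI impI)
    fix k i
    show "0 \<le> G' k i" "G' k i < int p ^ k" unfolding G'_def smul_def using p by simp_all
    show "p ^ n \<le> i \<Longrightarrow> G' k i = 0" using G unfolding G'_def smul_def Lam_def by simp
    have "G (Suc k) i mod int p ^ k = G k i" using G unfolding Lam_def by blast
    then have "(int p * G (Suc k) i) mod int p ^ k = (int p * G k i) mod int p ^ k"
      by (metis mod_mult_right_eq)
    then show "G' (Suc k) i mod int p ^ k = G' k i" unfolding G'_def smul_def
      by (metis mod_mod_cancel le_imp_power_dvd le_SucI order_refl)
  qed
  moreover have "F = smul p (int p ^ j) G'"
    unfolding FG G'_def smul_def by (intro ext) (simp add: mod_mult_right_eq ac_simps)
  ultimately show ?thesis unfolding pLam_def by blast
qed

lemma pLam_eq_zero: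
  assumes "F \<in> pLam p n j" and "k \<le> j"
  shows "F k i = 0"
proof -
  obtain G where "F = smul p (int p ^ j) G" using assms(1) unfolding pLam_def by blast
  moreover have "int p ^ k dvd int p ^ j" using assms(2) by (simp add: le_imp_power_dvd)
  ultimately show ?thesis unfolding smul_def by simp
qed

lemma pLam_one_if_level_one_eq_0:
  assumes p: "p > 0" and F: "F \<in> Lam p n" and F1: "F 1 = (\<lambda>i. 0)"
  shows "F \<in> pLam p n 1"
proof -
  have Lam: "0 \<le> F k i" "F k i < int p ^ k" "p ^ n \<le> i \<Longrightarrow> F k i = 0"
    "F (Suc k) i mod int p ^ k = F k i" for k i
    using F unfolding Lam_def by blast+
  have dvd: "int p dvd F (Suc k) i" for k i
    using Lam_mod_p[OF F, of "Suc k" i] F1 by (simp add: mod_eq_0_iff_dvd)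
  define G where "G k i = F (Suc k) i div int p" for k i
  have FG: "F (Suc k) i = int p * G k i" for k i
    unfolding G_def using dvd by simp
  have "G \<in> Lam p n" unfolding Lam_def
  proof (intro CollectI allI conjI impI)
    fix k i
    show "0 \<le> G k i" "G k i < int p ^ k"
      using Lam[of "Suc k" i] p unfolding FG by (simp_all add: zero_le_mult_iff)
    show "p ^ n \<le> i \<Longrightarrow> G k i = 0" using Lam(3)[of i "Suc k"] p unfolding FG by simp
    have "int p * (G (Suc k) i mod int p ^ k) = (int p * G (Suc k) i) mod (int p * int p ^ k)"
      by (rule mult_mod_right)
    also have "\<dots> = int p * G k i"
      using Lam(4)[of "Suc k" i] unfolding FG power_Suc .
    finally show "G (Suc k) i mod int p ^ k = G k i" using p by simp
  qed
  moreover have "F = smul p (int p ^ 1) G"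
    unfolding smul_def by (intro ext) (simp add: FG[symmetric] Lam(4))
  ultimately show ?thesis unfolding pLam_def by blast
qed

lemma The_threshold:
  fixes P :: "nat \<Rightarrow> bool"
  assumes P0: "P 0" and down: "\<And>j. P (Suc j) \<Longrightarrow> P j" and B: "\<not> P B"
  defines "L \<equiv> THE l. P l \<and> \<not> P (Suc l)"
  shows "P L" and "\<not> P (Suc L)"
proof -
  have mono: "P j \<Longrightarrow> i \<le> j \<Longrightarrow> P i" for i j
    by (induction j) (auto simp: le_Suc_eq dest: down)
  define l0 where "l0 = (LEAST j. \<not> P j) - 1"
  have "\<not> P (LEAST j. \<not> P j)" using B by (rule LeastI)
  moreover have "(LEAST j. \<not> P j) \<noteq> 0"
    using P0 \<open>\<not> P (LEAST j. \<not> P j)\<close> by (metis (full_types))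
  ultimately have "P l0 \<and> \<not> P (Suc l0)"
    unfolding l0_def using not_less_Least[of "(LEAST j. \<not> P j) - 1" "\<lambda>j. \<not> P j"] by auto
  moreover have "l = l0" if "P l \<and> \<not> P (Suc l)" for l
    using that \<open>P l0 \<and> \<not> P (Suc l0)\<close> mono by (metis Suc_leI linorder_neqE_nat)
  ultimately have "P L \<and> \<not> P (Suc L)" unfolding L_def by (rule theI)
  then show "P L" and "\<not> P (Suc L)" by auto
qed

lemma level_one_ne_0_if_mu_eq_0:
  assumes p: "prime p" and F: "F \<in> Lam p n" and nz: "F \<noteq> (\<lambda>k i. 0)" and mu: "mu p n F = 0"
  shows "F 1 \<noteq> (\<lambda>i. 0)"
proof
  assume F1: "F 1 = (\<lambda>i. 0)"
  have p0: "p > 0" using p by (simp add: prime_gt_0_nat)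
  obtain k i where "F k i \<noteq> 0"
  proof (rule ccontr)
    assume "\<not> thesis"
    then have "F = (\<lambda>k i. 0)" using that by (intro ext) blast
    with nz show False ..
  qed
  then have "F \<notin> pLam p n k" using pLam_eq_zero by blast
  moreover have "F \<in> pLam p n 0" using F smul_one[OF F] unfolding pLam_def by force
  ultimately have "F \<notin> pLam p n (Suc (mu p n F))"
    unfolding mu_def by (rule The_threshold(2)[rotated 2]) (rule pLam_Suc_imp[OF p0])
  then show False using pLam_one_if_level_one_eq_0[OF p0 F F1] mu by simp
qed

lemma lambda_eq_if_mu_eq_0:
  assumes F: "F \<in> Lam p n" and mu: "mu p n F = 0"
  shows "lambda p n F = (THE l. F 1 \<in> augpow p n l \<and> F 1 \<notin> augpow p n (Suc l))"
proof -
  have "(THE G. G \<in> Lam p n \<and> F = smul p (int p ^ mu p n F) G) = F"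
    using F mu smul_one by (intro the_equality) auto
  then show ?thesis unfolding lambda_def Let_def by simp
qed

lemma level_one_in_augpow_lambda:
  assumes p: "prime p" and n: "1 \<le> n" and F: "F \<in> Lam p n"
    and nz: "F \<noteq> (\<lambda>k i. 0)" and mu: "mu p n F = 0"
  shows "F 1 \<in> augpow p n (lambda p n F)" and "F 1 \<notin> augpow p n (Suc (lambda p n F))"
proof -
  have F1: "F 1 \<in> Ltil p n" by (rule Lam_one_in_Ltil[OF F])
  have zero: "F 1 \<in> augpow p n 0" using F1 by simp
  have down: "F 1 \<in> augpow p n j" if "F 1 \<in> augpow p n (Suc j)" for j
  proof -
    have "ideal2 [:int p:] ([:-1,1:] ^ min (Suc j) (p ^ n))
        \<subseteq> ideal2 [:int p:] ([:-1,1:] ^ min j (p ^ n))"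
      by (intro ideal2_subset_power min.mono) auto
    then show ?thesis using that unfolding augpow_iff[OF p n F1] by blast
  qed
  have top: "F 1 \<notin> augpow p n (p ^ n)"
    using Ltil_eq_zero_if_in_ideal2[OF F1] level_one_ne_0_if_mu_eq_0[OF p F nz mu]
    unfolding augpow_iff[OF p n F1] by auto
  show "F 1 \<in> augpow p n (lambda p n F)"
    unfolding lambda_eq_if_mu_eq_0[OF F mu] using zero down top by (rule The_threshold(1))
  show "F 1 \<notin> augpow p n (Suc (lambda p n F))"
    unfolding lambda_eq_if_mu_eq_0[OF F mu] using zero down top by (rule The_threshold(2))
qed

lemma level_one_decomposition:
  assumes p: "prime p" and n: "1 \<le> n" and F: "F \<in> Lam p n"
    and nz: "F \<noteq> (\<lambda>k i. 0)" and mu: "mu p n F = 0" and L: "lambda p n F < p ^ n"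
  obtains A B where "grpoly (p ^ n) (F 1) = [:int p:] * A + [:-1,1:] ^ lambda p n F * B"
    and "\<not> int p dvd poly B 1"
proof -
  define L where "L = lambda p n F"
  have F1: "F 1 \<in> Ltil p n" by (rule Lam_one_in_Ltil[OF F])
  have "grpoly (p ^ n) (F 1) \<in> ideal2 [:int p:] ([:-1,1:] ^ L)"
    using level_one_in_augpow_lambda(1)[OF p n F nz mu] L
    unfolding augpow_iff[OF p n F1] L_def by simp
  then obtain A B where AB: "grpoly (p ^ n) (F 1) = [:int p:] * A + [:-1,1:] ^ L * B"
    unfolding ideal2_iff by blast
  have "\<not> int p dvd poly B 1"
  proof
    assume "int p dvd poly B 1"
    then have "B \<in> ideal2 [:int p:] [:-1,1:]" by (simp add: ideal2_X_minus_one_iff)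
    then have "[:-1,1:] ^ L * B \<in> ideal2 [:int p:] ([:-1,1:] ^ L * [:-1,1:])"
      by (intro ideal2_mult_ideal2) auto
    then have "grpoly (p ^ n) (F 1) \<in> ideal2 [:int p:] ([:-1,1:] ^ L * [:-1,1:])"
      unfolding AB by (intro ideal2_add ideal2_left)
    moreover have "min (Suc L) (p ^ n) = Suc L" using L by (simp add: L_def)
    ultimately have "grpoly (p ^ n) (F 1) \<in> ideal2 [:int p:] ([:-1,1:] ^ min (Suc L) (p ^ n))"
      by (simp only: power_Suc2)
    then show False
      using level_one_in_augpow_lambda(2)[OF p n F nz mu]
      unfolding augpow_iff[OF p n F1] L_def by blast
  qed
  with AB show ?thesis using that unfolding L_def by blast
qed

section \<open>Periodicity and the image of nu\<close>

lemma grpoly_lam_mult_in_ideal2_Phi: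
  assumes p: "p > 0" and FG: "lam_mult p (Suc e) F G = nu p (Suc e) H"
  shows "grpoly (p ^ Suc e) (F k) * grpoly (p ^ Suc e) (G k) \<in> ideal2 (Phi p (p ^ e)) [:int p ^ k:]"
proof -
  define m where "m = p ^ e"
  define c where "c = lam_mult p (Suc e) F G k"
  define I where "I = ideal2 (Phi p m) [:int p ^ k:]"
  have N: "p ^ Suc e = p * m" by (simp add: m_def)
  have "c i = c (i mod m)" if "i < p * m" for i
  proof -
    have "i mod m < p * m" using that mod_less_eq_dividend[of i m] by linarith
    then show ?thesis using that unfolding c_def FG nu_def N by (simp add: m_def)
  qed
  then have "grpoly (p ^ Suc e) c = Phi p m * grpoly m c"
    unfolding N by (subst mult.commute) (rule grpoly_periodic)
  then have c: "grpoly (p ^ Suc e) c \<in> I" unfolding I_def by (simp add: ideal2_left)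
  have "[:0,1:] ^ p ^ Suc e - 1 \<in> I"
    unfolding I_def N Phi_times_X_power_minus_one[symmetric] by (rule ideal2_left)
  then have "ideal2 [:int p ^ k:] ([:0,1:] ^ p ^ Suc e - 1) \<subseteq> I"
    unfolding I_def by (intro ideal2_subset ideal2_gen_right)
  moreover have "grpoly (p ^ Suc e) c - grpoly (p ^ Suc e) (F k) * grpoly (p ^ Suc e) (G k)
      \<in> ideal2 [:int p ^ k:] ([:0,1:] ^ p ^ Suc e - 1)"
    unfolding c_def lam_mult_def using p by (intro grpoly_grmult) simp
  ultimately have "grpoly (p ^ Suc e) c - grpoly (p ^ Suc e) (F k) * grpoly (p ^ Suc e) (G k) \<in> I"
    by blast
  from ideal2_diff[OF c[unfolded I_def] this[unfolded I_def]] show ?thesis by (simp add: m_def)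
qed

lemma Lam_periodic_if_lam_mult_eq_nu:
  assumes p: "prime p" and F: "F \<in> Lam p (Suc e)" and G: "G \<in> Lam p (Suc e)"
    and FG: "lam_mult p (Suc e) F G = nu p (Suc e) H"
    and F1: "grpoly (p ^ Suc e) (F 1) = [:int p:] * A + [:-1,1:] ^ L * B"
    and B: "\<not> int p dvd poly B 1" and L: "L < p ^ Suc e - p ^ e"
    and i: "i + p ^ e < p ^ Suc e"
  shows "G k (i + p ^ e) = G k i"
proof -
  define N where "N = p ^ Suc e"
  \<comment> \<open>The cancellation loses one power of p, so level k + 1 controls level k.\<close>
  define f where "f = grpoly N (F (Suc k))"
  define g where "g = grpoly N (G (Suc k))"
  have "int p dvd F (Suc k) j - F 1 j" for j
    using Lam_mod_p[OF F, of "Suc k" j] dvd_minus_mod[of "int p" "F (Suc k) j"] by simp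
  then have "[:int p:] dvd f - grpoly N (F 1)"
    unfolding f_def grpoly_diff[symmetric] const_poly_dvd_iff coeff_grpoly by simp
  then obtain D where "f - grpoly N (F 1) = [:int p:] * D" by (rule dvdE)
  then have f: "f - [:-1,1:] ^ L * B = [:int p:] * (D + A)"
    using F1 by (simp add: N_def algebra_simps smult_add_right)
  have "f - [:-1,1:] ^ L * B \<in> ideal2 (Phi p (p ^ e)) [:int p:]"
    unfolding f by (rule ideal2_right)
  moreover have "f * g \<in> ideal2 (Phi p (p ^ e)) [:int p ^ Suc k:]"
    unfolding f_def g_def N_def using p
    by (intro grpoly_lam_mult_in_ideal2_Phi[OF _ FG]) (simp add: prime_gt_0_nat)
  ultimately have "g \<in> ideal2 (Phi p (p ^ e)) [:int p ^ k:]"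
    by (rule ideal2_Phi_const_cancel[OF p L _ B])
  then have "int p ^ k dvd G (Suc k) (i + p ^ e) - G (Suc k) i"
    using i unfolding g_def N_def power_Suc by (rule dvd_shift_if_in_ideal2_Phi)
  then have "G (Suc k) (i + p ^ e) mod int p ^ k = G (Suc k) i mod int p ^ k"
    by (simp add: mod_eq_dvd_iff)
  then show ?thesis using G unfolding Lam_def by simp
qed

lemma nu_image_if_periodic:
  assumes G: "G \<in> Lam p (Suc e)" and per: "\<And>k i. i + p ^ e < p ^ Suc e \<Longrightarrow> G k (i + p ^ e) = G k i"
  shows "\<exists>H \<in> Lam p e. G = nu p (Suc e) H"
proof
  define m where "m = p ^ e"
  have Lam: "0 \<le> G k i" "G k i < int p ^ k" "p ^ Suc e \<le> i \<Longrightarrow> G k i = 0"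
    "G (Suc k) i mod int p ^ k = G k i" for k i
    using G unfolding Lam_def by blast+
  have "p > 0" using Lam(1,2)[of 1 0] by simp
  then have "m > 0" by (simp add: m_def)
  have per2: "G k i = G k (i mod m)" if "i < p ^ Suc e" for k i
    using that
  proof (induction i rule: less_induct)
    case (less i)
    show ?case
    proof (cases "i < m")
      case False
      then have "G k i = G k (i - m)" using per[of "i - m" k] less.prems by (simp add: m_def)
      also have "\<dots> = G k ((i - m) mod m)" using less.IH[of "i - m"] less.prems \<open>m > 0\<close> False
        by simp
      finally show ?thesis using False by (simp add: le_mod_geq)
    qed simp
  qed
  show "G = nu p (Suc e) (\<lambda>k i. if i < m then G k i else 0)"
  proof (intro ext)
    fix k i
    show "G k i = nu p (Suc e) (\<lambda>k i. if i < m then G k i else 0) k i"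
      using per2[of i k] Lam(3)[of i k] \<open>m > 0\<close> unfolding nu_def m_def
      by (cases "i < p ^ Suc e") auto
  qed
  show "(\<lambda>k i. if i < m then G k i else 0) \<in> Lam p e"
    unfolding Lam_def m_def using Lam \<open>p > 0\<close> by auto
qed

theorem lemma4p10:
  fixes p n :: nat and F G :: "nat \<Rightarrow> nat \<Rightarrow> int"
  assumes "prime p" and "odd p" and "n \<ge> 1"
    and "F \<in> Lam p n" and "G \<in> Lam p n"
    and "F \<noteq> (\<lambda>k i. 0)"
    and "\<exists>H \<in> Lam p (n - 1). lam_mult p n F G = nu p n H"
    and "mu p n F = 0"
    and "lambda p n F < p ^ (n - 1)"
  shows "\<exists>H \<in> Lam p (n - 1). G = nu p n H"
proof -
  note p = assms(1) and n = assms(3) and F = assms(4) and G = assms(5)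
  obtain e where e: "n = Suc e" using n by (cases n) auto
  obtain H where FG: "lam_mult p n F G = nu p n H" using assms(7) by blast
  have "2 * p ^ e \<le> p * p ^ e" using prime_ge_2_nat[OF p] by (rule mult_right_mono) simp
  then have L: "lambda p n F < p ^ Suc e - p ^ e" and "lambda p n F < p ^ n"
    using assms(9) unfolding e power_Suc diff_Suc_1 by linarith+
  then obtain A B where F1: "grpoly (p ^ n) (F 1) = [:int p:] * A + [:-1,1:] ^ lambda p n F * B"
    and B: "\<not> int p dvd poly B 1"
    using level_one_decomposition[OF p n F assms(6,8)] by blast
  have "G k (i + p ^ e) = G k i" if "i + p ^ e < p ^ Suc e" for k i
    using Lam_periodic_if_lam_mult_eq_nu[OF p _ _ _ _ B L that] F G FG F1 unfolding e by blast
  then show ?thesis using nu_image_if_periodic[of G p e] G unfolding e by simp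
qed

end
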